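(* Let $\overset{1}{\nabla}$ be a concircularly semi-symmetric metric connection on an $n$-dimensional pseudo-Riemannian manifold $(\mathcal M,g)$ with generator $\pi$ and associated vector field $P$. Then $\overset{0}{E}=\overset{g}{E}+\frac{n-1}{4n}\pi(P)g-\frac{n-1}{4}\pi\otimes\pi$, $\overset{1}{E}=\overset{2}{E}=\overset{3}{E}=\overset{g}{E}$, $\overset{4}{E}=\overset{g}{E}+\frac{n-1}{n}\pi(P)g-(n-1)\pi\otimes\pi$, $\overset{5}{E}=\overset{g}{E}+\frac{n-1}{2n}\pi(P)g-\frac{n-1}{2}\pi\otimes\pi$. In particular the traceless Ricci tensor $\overset{g}{E}$ is invariant under the change of connection $\overset{g}{\nabla}\to\overset{1}{\nabla}$.
   Context: Let $(\mathcal M,g)$ be an $n$-dimensional pseudo-Riemannian manifold with Levi-Civita connection $\overset{g}{\nabla}$, let $P$ be a vector field and $\pi=g(\cdot,P)$ its associated 1-form. The semi-symmetric metric connection generated by $\pi$ is $\overset{1}{\nabla}_XY=\overset{g}{\nabla}_XY+\pi(Y)X-g(X,Y)P$; it satisfies $\overset{1}{\nabla}g=0$ and has torsion $\overset{1}{T}(X,Y)=\pi(Y)X-\pi(X)Y$. It is called a concircularly semi-symmetric metric connection if there is a smooth function $\omega$ on $\mathcal M$ such that $(\overset{g}{\nabla}_X\pi)(Y)-\pi(X)\pi(Y)=\omega\, g(X,Y)$ for all vector fields $X,Y$. Curvature tensors: $\overset{1}{R}(X,Y)Z=\overset{1}{\nabla}_X\overset{1}{\nabla}_YZ-\overset{1}{\nabla}_Y\overset{1}{\nabla}_XZ-\overset{1}{\nabla}_{[X,Y]}Z$,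 and with $\mathfrak S_{XYZ}$ the cyclic sum over $X,Y,Z$: $\overset{0}{R}(X,Y)Z=\overset{1}{R}(X,Y)Z-\tfrac12(\overset{1}{\nabla}_X\overset{1}{T})(Y,Z)+\tfrac12(\overset{1}{\nabla}_Y\overset{1}{T})(X,Z)-\tfrac14\mathfrak S_{XYZ}\overset{1}{T}(\overset{1}{T}(X,Y),Z)-\tfrac14\overset{1}{T}(\overset{1}{T}(X,Y),Z)$; $\overset{2}{R}(X,Y)Z=\overset{1}{R}(X,Y)Z-(\overset{1}{\nabla}_X\overset{1}{T})(Y,Z)+(\overset{1}{\nabla}_Y\overset{1}{T})(X,Z)-\mathfrak S_{XYZ}\overset{1}{T}(\overset{1}{T}(X,Y),Z)$; $\overset{3}{R}(X,Y)Z=\overset{1}{R}(X,Y)Z+(\overset{1}{\nabla}_Y\overset{1}{T})(X,Z)$; $\overset{4}{R}(X,Y)Z=\overset{1}{R}(X,Y)Z+(\overset{1}{\nabla}_Y\overset{1}{T})(X,Z)-\overset{1}{T}(\overset{1}{T}(X,Y),Z)$; $\overset{5}{R}(X,Y)Z=\overset{1}{R}(X,Y)Z-\tfrac12(\overset{1}{\nabla}_X\overset{1}{T})(Y,Z)+\tfrac12(\overset{1}{\nabla}_Y\overset{1}{T})(X,Z)-\tfrac12\mathfrak S_{XYZ}\overset{1}{T}(\overset{1}{T}(X,Y),Z)+\tfrac12\overset{1}{T}(\overset{1}{T}(Z,X),Y)$. The Ricci tensors are $\overset{\theta}{Ric}(Y,Z)=\mathrm{tr}(X\mapsto \overset{\theta}{R}(X,Y)Z)$,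 $\theta=0,\dots,5$, and $\overset{g}{Ric}$ is the Ricci tensor of $\overset{g}{\nabla}$ defined the same way; $\overset{\theta}{r}$ and $\overset{g}{r}$ are their $g$-traces. Einstein type tensors: $\overset{\theta}{E}=\overset{\theta}{Ric}-\frac{\overset{\theta}{r}}{n}g$ and traceless Ricci tensor $\overset{g}{E}=\overset{g}{Ric}-\frac{\overset{g}{r}}{n}g$. *)

theory Defs
  imports "HOL-Analysis.Analysis"
begin

text \<open>The manifold is an open coordinate domain U of
R^n (n = CARD('n)); tensor fields are given by their components in the coordinate
frame. A connection is given by its coefficients C x k i j, meaning
nabla_{d_i} d_j = sum_k C x k i j d_k at the point x.\<close>

definition pd :: "'n::finite \<Rightarrow> (real^'n \<Rightarrow> real) \<Rightarrow> real^'n \<Rightarrow> real" where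
  "pd i f x = frechet_derivative f (at x) (axis i 1)"

fun pdn :: "'n::finite list \<Rightarrow> (real^'n \<Rightarrow> real) \<Rightarrow> real^'n \<Rightarrow> real" where
  "pdn [] f = f"
| "pdn (i # is) f = pd i (pdn is f)"

definition smooth_on :: "(real^'n::finite) set \<Rightarrow> (real^'n \<Rightarrow> real) \<Rightarrow> bool" where
  "smooth_on U f \<longleftrightarrow> (\<forall>is. \<forall>x\<in>U. pdn is f differentiable (at x))"

definition pseudo_riemannian_on :: "(real^'n::finite) set \<Rightarrow> (real^'n \<Rightarrow> real^'n^'n) \<Rightarrow> bool" where
  "pseudo_riemannian_on U g \<longleftrightarrow> open U \<and>
     (\<forall>a b. smooth_on U (\<lambda>y. g y $ a $ b)) \<and>
     (\<forall>x\<in>U. transpose (g x) = g x \<and> invertible (g x))"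

definition ginv :: "(real^'n::finite \<Rightarrow> real^'n^'n) \<Rightarrow> real^'n \<Rightarrow> 'n \<Rightarrow> 'n \<Rightarrow> real" where
  "ginv g x a b = matrix_inv (g x) $ a $ b"

definition christoffel :: "(real^'n::finite \<Rightarrow> real^'n^'n) \<Rightarrow> real^'n \<Rightarrow> 'n \<Rightarrow> 'n \<Rightarrow> 'n \<Rightarrow> real" where
  "christoffel g x k i j = (1/2) * (\<Sum>l\<in>UNIV. ginv g x k l *
      (pd i (\<lambda>y. g y $ j $ l) x + pd j (\<lambda>y. g y $ i $ l) x - pd l (\<lambda>y. g y $ i $ j) x))"

definition pi_form :: "(real^'n::finite \<Rightarrow> real^'n^'n) \<Rightarrow> (real^'n \<Rightarrow> real^'n) \<Rightarrow> real^'n \<Rightarrow> 'n \<Rightarrow> real" where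
  "pi_form g P x j = (\<Sum>l\<in>UNIV. g x $ j $ l * P x $ l)"

text \<open>Semi-symmetric metric connection: nabla1_X Y = nablag_X Y + pi(Y) X - g(X,Y) P.\<close>
definition ssm_conn :: "(real^'n::finite \<Rightarrow> real^'n^'n) \<Rightarrow> (real^'n \<Rightarrow> real^'n) \<Rightarrow> real^'n \<Rightarrow> 'n \<Rightarrow> 'n \<Rightarrow> 'n \<Rightarrow> real" where
  "ssm_conn g P x k i j = christoffel g x k i j + pi_form g P x j * (if k = i then 1 else 0)
      - g x $ i $ j * P x $ k"

definition cov_pi :: "(real^'n::finite \<Rightarrow> real^'n^'n) \<Rightarrow> (real^'n \<Rightarrow> real^'n) \<Rightarrow> real^'n \<Rightarrow> 'n \<Rightarrow> 'n \<Rightarrow> real" where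
  "cov_pi g P x i j = pd i (\<lambda>y. pi_form g P y j) x - (\<Sum>m\<in>UNIV. christoffel g x m i j * pi_form g P x m)"

definition concircular_ssm :: "(real^'n::finite) set \<Rightarrow> (real^'n \<Rightarrow> real^'n^'n) \<Rightarrow> (real^'n \<Rightarrow> real^'n) \<Rightarrow> (real^'n \<Rightarrow> real) \<Rightarrow> bool" where
  "concircular_ssm U g P \<omega> \<longleftrightarrow> smooth_on U \<omega> \<and>
     (\<forall>x\<in>U. \<forall>i j. cov_pi g P x i j - pi_form g P x i * pi_form g P x j = \<omega> x * g x $ i $ j)"

type_synonym 'n conn = "real^'n \<Rightarrow> 'n \<Rightarrow> 'n \<Rightarrow> 'n \<Rightarrow> real"
type_synonym 'n tens13 = "real^'n \<Rightarrow> 'n \<Rightarrow> 'n \<Rightarrow> 'n \<Rightarrow> 'n \<Rightarrow> real"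

text \<open>Curvature R(d_i,d_j)d_k = sum_l curv C x l i j k d_l, with
R(X,Y)Z = nabla_X nabla_Y Z - nabla_Y nabla_X Z - nabla_[X,Y] Z.\<close>
definition curv :: "'n::finite conn \<Rightarrow> 'n tens13" where
  "curv C x l i j k = pd i (\<lambda>y. C y l j k) x - pd j (\<lambda>y. C y l i k) x
      + (\<Sum>m\<in>UNIV. C x m j k * C x l i m - C x m i k * C x l j m)"

definition tors :: "'n::finite conn \<Rightarrow> 'n conn" where
  "tors C x l i j = C x l i j - C x l j i"

text \<open>(nabla_{d_i} T)(d_j,d_k) = sum_l covd C T x i l j k d_l.\<close>
definition covd :: "'n::finite conn \<Rightarrow> 'n conn \<Rightarrow> 'n tens13" where
  "covd C T x i l j k = pd i (\<lambda>y. T y l j k) x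
     + (\<Sum>m\<in>UNIV. C x l i m * T x m j k - C x m i j * T x l m k - C x m i k * T x l j m)"

text \<open>T(T(d_a,d_b),d_c) = sum_l TT T x l a b c d_l.\<close>
definition TT :: "'n::finite conn \<Rightarrow> 'n tens13" where
  "TT T x l a b c = (\<Sum>m\<in>UNIV. T x m a b * T x l m c)"

definition cycTT :: "'n::finite conn \<Rightarrow> 'n tens13" where
  "cycTT T x l a b c = TT T x l a b c + TT T x l b c a + TT T x l c a b"

definition R0 :: "'n::finite conn \<Rightarrow> 'n tens13" where
  "R0 C x l i j k = curv C x l i j k - 1/2 * covd C (tors C) x i l j k
     + 1/2 * covd C (tors C) x j l i k - 1/4 * cycTT (tors C) x l i j k - 1/4 * TT (tors C) x l i j k"

definition R1 :: "'n::finite conn \<Rightarrow> 'n tens13" where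
  "R1 C = curv C"

definition R2 :: "'n::finite conn \<Rightarrow> 'n tens13" where
  "R2 C x l i j k = curv C x l i j k - covd C (tors C) x i l j k
     + covd C (tors C) x j l i k - cycTT (tors C) x l i j k"

definition R3 :: "'n::finite conn \<Rightarrow> 'n tens13" where
  "R3 C x l i j k = curv C x l i j k + covd C (tors C) x j l i k"

definition R4 :: "'n::finite conn \<Rightarrow> 'n tens13" where
  "R4 C x l i j k = curv C x l i j k + covd C (tors C) x j l i k - TT (tors C) x l i j k"

definition R5 :: "'n::finite conn \<Rightarrow> 'n tens13" where
  "R5 C x l i j k = curv C x l i j k - 1/2 * covd C (tors C) x i l j k
     + 1/2 * covd C (tors C) x j l i k - 1/2 * cycTT (tors C) x l i j k + 1/2 * TT (tors C) x l k i j"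

text \<open>Ricci(d_j,d_k) = trace of X |-> R(X,d_j)d_k.\<close>
definition ricci :: "'n::finite tens13 \<Rightarrow> real^'n \<Rightarrow> 'n \<Rightarrow> 'n \<Rightarrow> real" where
  "ricci R x j k = (\<Sum>i\<in>UNIV. R x i i j k)"

definition scal :: "(real^'n::finite \<Rightarrow> real^'n^'n) \<Rightarrow> (real^'n \<Rightarrow> 'n \<Rightarrow> 'n \<Rightarrow> real) \<Rightarrow> real^'n \<Rightarrow> real" where
  "scal g Ric x = (\<Sum>j\<in>UNIV. \<Sum>k\<in>UNIV. ginv g x j k * Ric x j k)"

definition einstein :: "(real^'n::finite \<Rightarrow> real^'n^'n) \<Rightarrow> 'n tens13 \<Rightarrow> real^'n \<Rightarrow> 'n \<Rightarrow> 'n \<Rightarrow> real" where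
  "einstein g R x j k = ricci R x j k - scal g (ricci R) x / real CARD('n) * g x $ j $ k"

definition LC :: "(real^'n::finite \<Rightarrow> real^'n^'n) \<Rightarrow> 'n conn" where
  "LC g x k i j = christoffel g x k i j"

definition SSM :: "(real^'n::finite \<Rightarrow> real^'n^'n) \<Rightarrow> (real^'n \<Rightarrow> real^'n) \<Rightarrow> 'n conn" where
  "SSM g P x k i j = ssm_conn g P x k i j"

end

theory Submission
  imports Defs
begin

(* Write the semi-symmetric metric connection as nabla^1 = nabla^g + A with
   A(X,Y) = pi(Y) X - g(X,Y) P. Concircularity, nabla pi = omega g + pi (x) pi, gives after
   raising the index nabla P = omega id + pi (x) P, so nabla^g A, the torsion T of nabla^1 and
   nabla^1 T are algebraic expressions in g, pi, P and omega. Contracting, every Ricci tensor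
   Ric^theta equals Ric^g + a g + b pi (x) pi for scalars a, b depending on theta. The multiple
   of g cancels in the traceless part, while b pi (x) pi contributes b (pi (x) pi - pi(P)/n g);
   here b = -(n-1)/4, 0, 0, 0, -(n-1), -(n-1)/2 for theta = 0, ..., 5. *)

lemma pd_has_derivative: "(f has_derivative D) (at x) \<Longrightarrow> pd i f x = D (axis i 1)"
  unfolding pd_def using frechet_derivative_at by metis

lemma pd_cong_open:
  assumes "open U" "x \<in> U" "\<And>y. y \<in> U \<Longrightarrow> f y = h y"
  shows "pd i f x = pd i h x"
proof -
  have "(f has_derivative D) (at x) \<longleftrightarrow> (h has_derivative D) (at x)" for D
    using has_derivative_transform_within_open[OF _ assms(1,2)] assms(3) by metis
  then show ?thesis unfolding pd_def frechet_derivative_def by simp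
qed

lemma differentiable_cong_open:
  assumes "open U" "x \<in> U" "\<And>y. y \<in> U \<Longrightarrow> f y = h y" "h differentiable (at x)"
  shows "f differentiable (at x)"
  using assms has_derivative_transform_within_open[OF _ assms(1,2)] unfolding differentiable_def
  by metis

lemma pd_add:
  "f differentiable (at x) \<Longrightarrow> h differentiable (at x) \<Longrightarrow>
   pd i (\<lambda>y. f y + h y) x = pd i f x + pd i h x"
  using pd_has_derivative[OF has_derivative_add[OF frechet_derivative_works[THEN iffD1]
        frechet_derivative_works[THEN iffD1]]] by (simp add: pd_def)

lemma pd_diff:
  "f differentiable (at x) \<Longrightarrow> h differentiable (at x) \<Longrightarrow>
   pd i (\<lambda>y. f y - h y) x = pd i f x - pd i h x"
  using pd_has_derivative[OF has_derivative_diff[OF frechet_derivative_works[THEN iffD1]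
        frechet_derivative_works[THEN iffD1]]] by (simp add: pd_def)

lemma pd_mult:
  "f differentiable (at x) \<Longrightarrow> h differentiable (at x) \<Longrightarrow>
   pd i (\<lambda>y. f y * h y) x = f x * pd i h x + pd i f x * h x"
  using pd_has_derivative[OF has_derivative_mult[OF frechet_derivative_works[THEN iffD1]
        frechet_derivative_works[THEN iffD1]]] by (simp add: pd_def)

lemma pd_mult_const: "f differentiable (at x) \<Longrightarrow> pd i (\<lambda>y. f y * c) x = pd i f x * c"
  using pd_has_derivative[OF has_derivative_mult_left[OF frechet_derivative_works[THEN iffD1]]]
  by (simp add: pd_def)

lemma pd_sum:
  assumes "\<And>a. a \<in> S \<Longrightarrow> f a differentiable (at x)"
  shows "pd i (\<lambda>y. \<Sum>a\<in>S. f a y) x = (\<Sum>a\<in>S. pd i (f a) x)"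
proof -
  have "((\<lambda>y. \<Sum>a\<in>S. f a y)
      has_derivative (\<lambda>v. \<Sum>a\<in>S. frechet_derivative (f a) (at x) v)) (at x)"
    using assms by (intro has_derivative_sum) (simp add: frechet_derivative_works)
  from pd_has_derivative[OF this, of i] show ?thesis
    unfolding pd_def by simp
qed

(* Kronecker deltas are if-expressions in the coordinate definitions; these rules let simp
   contract them inside sums. *)
lemma if_zero_mult [simp]: "(if P then y else 0) * (x::real) = (if P then y * x else 0)"
  by simp

lemma mult_if_zero [simp]: "(x::real) * (if P then y else 0) = (if P then x * y else 0)"
  by simp

lemma sum_if_zero:
  "(\<Sum>m\<in>S. if P then f m else (0::real)) = (if P then (\<Sum>m\<in>S. f m) else 0)"
  by simp

lemma differentiable_prod:
  fixes f :: "'i \<Rightarrow> 'a::real_normed_vector \<Rightarrow> real"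
  assumes "\<And>i. i \<in> I \<Longrightarrow> f i differentiable (at x)"
  shows "(\<lambda>y. \<Prod>i\<in>I. f i y) differentiable (at x)"
  using has_derivative_prod[of I f, OF assms[unfolded differentiable_def, THEN someI_ex]]
  by (rule differentiableI)

lemma differentiable_det:
  fixes M :: "'a::real_normed_vector \<Rightarrow> real^'n::finite^'n"
  assumes "\<And>i j. (\<lambda>y. M y $ i $ j) differentiable (at x)"
  shows "(\<lambda>y. det (M y)) differentiable (at x)"
  unfolding det_def
  by (intro differentiable_sum ballI differentiable_mult differentiable_const differentiable_prod)
    (simp_all add: assms)

lemma matrix_inv_mult:
  "invertible (A::real^'n::finite^'n) \<Longrightarrow> A ** matrix_inv A = mat 1 \<and> matrix_inv A ** A = mat 1"
  unfolding invertible_def matrix_inv_def by (rule someI_ex)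

lemma matrix_inv_cramer:
  fixes A :: "real^'n::finite^'n"
  assumes "invertible A"
  shows "matrix_inv A $ a $ b = det (\<chi> i j. if j = a then axis b 1 $ i else A $ i $ j) / det A"
proof -
  let ?x = "\<chi> i. matrix_inv A $ i $ b"
  have "A *v ?x = (\<chi> i. (A ** matrix_inv A) $ i $ b)"
    by (simp add: vec_eq_iff matrix_vector_mult_def matrix_matrix_mult_def)
  also have "\<dots> = axis b 1"
    using matrix_inv_mult[OF assms] by (simp add: mat_def axis_def vec_eq_iff)
  finally have "?x = (\<chi> k. det (\<chi> i j. if j = k then axis b 1 $ i else A $ i $ j) / det A)"
    using cramer assms invertible_det_nz by blast
  from arg_cong[OF this, of "\<lambda>v. v $ a"] show ?thesis by simp
qed

lemma differentiable_matrix_inv: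
  fixes M :: "real^'m \<Rightarrow> real^'n::finite^'n"
  assumes "open U" "x \<in> U" "\<And>y. y \<in> U \<Longrightarrow> invertible (M y)"
    and "\<And>i j. (\<lambda>y. M y $ i $ j) differentiable (at x)"
  shows "(\<lambda>y. matrix_inv (M y) $ a $ b) differentiable (at x)"
proof (rule differentiable_cong_open[OF assms(1,2)])
  show "matrix_inv (M y) $ a $ b
      = det (\<chi> i j. if j = a then axis b 1 $ i else M y $ i $ j) / det (M y)" if "y \<in> U" for y
    using matrix_inv_cramer assms(3) that by blast
  have "det (M x) \<noteq> 0"
    using assms(2,3) invertible_det_nz by blast
  moreover have
    "(\<lambda>y. (\<chi> i j. if j = a then axis b 1 $ i else M y $ i $ j) $ i $ j) differentiable (at x)"
    for i j by (cases "j = a") (simp_all add: assms(4))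
  ultimately show "(\<lambda>y. det (\<chi> i j. if j = a then axis b 1 $ i else M y $ i $ j) / det (M y))
      differentiable (at x)"
    by (intro differentiable_divide differentiable_det assms(4))
qed

lemma curv_add_conn:
  fixes \<Gamma> A :: "'n::finite conn"
  assumes "\<And>l i j. (\<lambda>y. \<Gamma> y l i j) differentiable (at x)"
    and "\<And>l i j. (\<lambda>y. A y l i j) differentiable (at x)"
    and "\<And>l i j. \<Gamma> x l i j = \<Gamma> x l j i"
  shows "curv (\<lambda>y l i j. \<Gamma> y l i j + A y l i j) x l i j k
    = curv \<Gamma> x l i j k + covd \<Gamma> A x i l j k - covd \<Gamma> A x j l i k
      + (\<Sum>m\<in>UNIV. A x m j k * A x l i m - A x m i k * A x l j m)"
  unfolding curv_def covd_def pd_add[OF assms(1,2)]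
  by (simp add: sum.distrib sum_subtractf ring_distribs assms(3)[of _ i j] algebra_simps)

lemma covd_add_conn:
  "covd (\<lambda>y l i j. \<Gamma> y l i j + A y l i j) T x i l j k
    = covd \<Gamma> T x i l j k
      + (\<Sum>m\<in>UNIV. A x l i m * T x m j k - A x m i j * T x l m k - A x m i k * T x l j m)"
  unfolding covd_def by (simp add: sum.distrib sum_subtractf ring_distribs algebra_simps)

lemma covd_cong_open:
  assumes "open U" "x \<in> U" "\<And>y. y \<in> U \<Longrightarrow> T y = T' y"
  shows "covd C T x = covd C T' x"
proof -
  have "pd i (\<lambda>y. T y l j k) x = pd i (\<lambda>y. T' y l j k) x" for i l j k
    using assms by (intro pd_cong_open[OF assms(1,2)]) simp
  then show ?thesis
    unfolding covd_def using assms(2,3) by simp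
qed

lemma covd_tors:
  assumes "\<And>l i j. (\<lambda>y. A y l i j) differentiable (at x)"
  shows "covd \<Gamma> (tors A) x i l j k = covd \<Gamma> A x i l j k - covd \<Gamma> A x i l k j"
  unfolding covd_def tors_def pd_diff[OF assms assms]
  by (simp add: sum.distrib sum_subtractf ring_distribs algebra_simps)

locale pseudo_riemannian_chart =
  fixes U :: "(real^'n::finite) set" and g :: "real^'n \<Rightarrow> real^'n^'n"
  assumes pseudo_riemannian: "pseudo_riemannian_on U g"
begin

lemma open_chart: "open U"
  using pseudo_riemannian by (simp add: pseudo_riemannian_on_def)

lemma metric_sym:
  assumes "y \<in> U"
  shows "g y $ a $ b = g y $ b $ a"
proof -
  have "transpose (g y) = g y"
    using pseudo_riemannian assms by (simp add: pseudo_riemannian_on_def)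
  from arg_cong[OF this, of "\<lambda>M. M $ b $ a"] show ?thesis
    by (simp add: transpose_def)
qed

lemma metric_invertible: "y \<in> U \<Longrightarrow> invertible (g y)"
  using pseudo_riemannian by (simp add: pseudo_riemannian_on_def)

lemma metric_smooth: "smooth_on U (\<lambda>y. g y $ a $ b)"
  using pseudo_riemannian by (simp add: pseudo_riemannian_on_def)

lemma metric_differentiable: "y \<in> U \<Longrightarrow> (\<lambda>y. g y $ a $ b) differentiable (at y)"
  using metric_smooth unfolding smooth_on_def by (metis pdn.simps(1))

lemma pd_metric_differentiable: "y \<in> U \<Longrightarrow> pd c (\<lambda>y. g y $ a $ b) differentiable (at y)"
  using metric_smooth unfolding smooth_on_def by (metis pdn.simps)

lemma ginv_mult_metric:
  "y \<in> U \<Longrightarrow> (\<Sum>b\<in>UNIV. ginv g y a b * g y $ b $ c) = (if a = c then 1 else 0)"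
  using matrix_inv_mult[OF metric_invertible, of y]
  by (auto simp: ginv_def matrix_matrix_mult_def mat_def vec_eq_iff)

lemma metric_mult_ginv:
  "y \<in> U \<Longrightarrow> (\<Sum>b\<in>UNIV. g y $ a $ b * ginv g y b c) = (if a = c then 1 else 0)"
  using matrix_inv_mult[OF metric_invertible, of y]
  by (auto simp: ginv_def matrix_matrix_mult_def mat_def vec_eq_iff)

lemma ginv_differentiable: "y \<in> U \<Longrightarrow> (\<lambda>z. ginv g z a b) differentiable (at y)"
  unfolding ginv_def
  by (rule differentiable_matrix_inv[OF open_chart _ metric_invertible metric_differentiable])

lemma christoffel_differentiable:
  "y \<in> U \<Longrightarrow> (\<lambda>z. christoffel g z k i j) differentiable (at y)"
  unfolding christoffel_def
  by (intro differentiable_mult differentiable_const differentiable_sum ballI differentiable_add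
      differentiable_diff ginv_differentiable pd_metric_differentiable) auto

lemma christoffel_sym: "y \<in> U \<Longrightarrow> christoffel g y k i j = christoffel g y k j i"
proof -
  assume "y \<in> U"
  then have "pd l (\<lambda>y. g y $ i $ j) y = pd l (\<lambda>y. g y $ j $ i) y" for l
    by (intro pd_cong_open[OF open_chart]) (auto intro: metric_sym)
  then show ?thesis
    unfolding christoffel_def by (simp add: algebra_simps)
qed

lemma metric_christoffel:
  assumes "y \<in> U"
  shows "(\<Sum>m\<in>UNIV. g y $ l $ m * christoffel g y m i j)
     = 1/2 * (pd i (\<lambda>y. g y $ j $ l) y + pd j (\<lambda>y. g y $ i $ l) y - pd l (\<lambda>y. g y $ i $ j) y)"
proof -
  let ?S = "\<lambda>a. pd i (\<lambda>y. g y $ j $ a) y + pd j (\<lambda>y. g y $ i $ a) y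
    - pd a (\<lambda>y. g y $ i $ j) y"
  have "(\<Sum>m\<in>UNIV. g y $ l $ m * christoffel g y m i j)
      = 1/2 * (\<Sum>m\<in>UNIV. \<Sum>a\<in>UNIV. g y $ l $ m * ginv g y m a * ?S a)"
    unfolding christoffel_def by (simp add: sum_distrib_left mult.assoc)
  also have "\<dots> = 1/2 * (\<Sum>a\<in>UNIV. (\<Sum>m\<in>UNIV. g y $ l $ m * ginv g y m a) * ?S a)"
    by (subst sum.swap) (simp add: sum_distrib_right)
  also have "\<dots> = 1/2 * ?S l"
    by (simp add: metric_mult_ginv[OF assms])
  finally show ?thesis .
qed

lemma pd_metric:
  assumes "y \<in> U"
  shows "pd i (\<lambda>y. g y $ j $ k) y
    = (\<Sum>m\<in>UNIV. g y $ k $ m * christoffel g y m i j + g y $ j $ m * christoffel g y m i k)"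
proof -
  have sym: "pd l (\<lambda>y. g y $ a $ b) y = pd l (\<lambda>y. g y $ b $ a) y" for l a b
    by (intro pd_cong_open[OF open_chart assms]) (auto intro: metric_sym)
  have "(\<Sum>m\<in>UNIV. g y $ k $ m * christoffel g y m i j + g y $ j $ m * christoffel g y m i k)
    = 1/2 * (pd i (\<lambda>y. g y $ j $ k) y + pd j (\<lambda>y. g y $ i $ k) y - pd k (\<lambda>y. g y $ i $ j) y)
      + 1/2 * (pd i (\<lambda>y. g y $ k $ j) y + pd k (\<lambda>y. g y $ i $ j) y - pd j (\<lambda>y. g y $ i $ k) y)"
    by (simp only: sum.distrib metric_christoffel[OF assms])
  then show ?thesis
    using sym[of i k j] by (simp add: field_simps)
qed

lemma trace_ginv_metric:
  assumes "y \<in> U"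
  shows "(\<Sum>j\<in>UNIV. \<Sum>k\<in>UNIV. ginv g y j k * g y $ j $ k) = CARD('n)"
proof -
  have "(\<Sum>j\<in>UNIV. \<Sum>k\<in>UNIV. ginv g y j k * g y $ j $ k)
      = (\<Sum>j\<in>UNIV. \<Sum>k\<in>UNIV. ginv g y j k * g y $ k $ j)"
    using metric_sym[OF assms] by simp
  then show ?thesis by (simp add: ginv_mult_metric[OF assms])
qed

lemma ginv_pi_form: "y \<in> U \<Longrightarrow> (\<Sum>k\<in>UNIV. ginv g y l k * pi_form g P y k) = P y $ l"
proof -
  assume y: "y \<in> U"
  have "(\<Sum>k\<in>UNIV. ginv g y l k * pi_form g P y k)
      = (\<Sum>a\<in>UNIV. (\<Sum>k\<in>UNIV. ginv g y l k * g y $ k $ a) * P y $ a)"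
    unfolding pi_form_def
    by (simp add: sum_distrib_left sum_distrib_right mult.assoc) (rule sum.swap)
  then show ?thesis by (simp add: ginv_mult_metric[OF y])
qed

lemma ginv_pi_form_pi_form:
  assumes "y \<in> U"
  shows "(\<Sum>j\<in>UNIV. \<Sum>k\<in>UNIV. ginv g y j k * (pi_form g P y j * pi_form g P y k))
    = (\<Sum>a\<in>UNIV. pi_form g P y a * P y $ a)"
proof -
  have "(\<Sum>j\<in>UNIV. \<Sum>k\<in>UNIV. ginv g y j k * (pi_form g P y j * pi_form g P y k))
      = (\<Sum>j\<in>UNIV. pi_form g P y j * (\<Sum>k\<in>UNIV. ginv g y j k * pi_form g P y k))"
    by (simp add: sum_distrib_left mult_ac)
  then show ?thesis by (simp add: ginv_pi_form[OF assms])
qed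

lemma raise_index:
  assumes "y \<in> U" and "\<And>k. (\<Sum>l\<in>UNIV. g y $ k $ l * V l) = w k"
  shows "V l = (\<Sum>k\<in>UNIV. ginv g y l k * w k)"
proof -
  have "(\<Sum>k\<in>UNIV. ginv g y l k * w k)
      = (\<Sum>a\<in>UNIV. (\<Sum>k\<in>UNIV. ginv g y l k * g y $ k $ a) * V a)"
    unfolding assms(2)[symmetric]
    by (simp add: sum_distrib_left sum_distrib_right mult.assoc) (rule sum.swap)
  then show ?thesis by (simp add: ginv_mult_metric[OF assms(1)])
qed

lemma einstein_ricci_shift:
  assumes "y \<in> U"
    and "\<And>j k. ricci R y j k = ricci R' y j k + a * g y $ j $ k + b * (w j * w k)"
  shows "einstein g R y j k = einstein g R' y j k
    + b * (w j * w k - (\<Sum>c\<in>UNIV. \<Sum>d\<in>UNIV. ginv g y c d * (w c * w d)) / CARD('n)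
      * g y $ j $ k)"
proof -
  have "scal g (ricci R) y = scal g (ricci R') y + a * CARD('n)
      + b * (\<Sum>c\<in>UNIV. \<Sum>d\<in>UNIV. ginv g y c d * (w c * w d))"
    unfolding scal_def assms(2)
    by (simp add: algebra_simps sum.distrib sum_distrib_left flip: trace_ginv_metric[OF assms(1)])
  then show ?thesis
    unfolding einstein_def assms(2) by (simp add: field_simps)
qed

end

(* The data of the semi-symmetric connection at a single point: G = g(x), Q = P(x), p = pi(x).
   A is the difference tensor nabla^1 - nabla^g, T the torsion of nabla^1, and covA the value of
   nabla^g A forced by concircularity (see covd_LC_ssm_deformation). *)
locale ssm_algebra =
  fixes G :: "'n::finite \<Rightarrow> 'n \<Rightarrow> real" and Q :: "'n \<Rightarrow> real" and \<omega> :: real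
  assumes G_sym: "G a b = G b a"
begin

definition p :: "'n \<Rightarrow> real" where "p a = (\<Sum>l\<in>UNIV. G a l * Q l)"

definition pQ :: real where "pQ = (\<Sum>a\<in>UNIV. p a * Q a)"

definition A :: "'n \<Rightarrow> 'n \<Rightarrow> 'n \<Rightarrow> real" where
  "A l i j = p j * (if l = i then 1 else 0) - G i j * Q l"

definition T :: "'n \<Rightarrow> 'n \<Rightarrow> 'n \<Rightarrow> real" where
  "T l j k = p k * (if l = j then 1 else 0) - p j * (if l = k then 1 else 0)"

definition covA :: "'n \<Rightarrow> 'n \<Rightarrow> 'n \<Rightarrow> 'n \<Rightarrow> real" where
  "covA i l j k = (\<omega> * G i k + p i * p k) * (if l = j then 1 else 0)
     - G j k * (\<omega> * (if l = i then 1 else 0) + p i * Q l)"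

lemma contract_G_Q:
  "(\<Sum>m\<in>UNIV. G j m * Q m) = p j" "(\<Sum>m\<in>UNIV. G m j * Q m) = p j"
  "(\<Sum>m\<in>UNIV. G j m * Q m * c) = p j * c" "(\<Sum>m\<in>UNIV. G m j * Q m * c) = p j * c"
  "(\<Sum>m\<in>UNIV. c * (G j m * Q m)) = c * p j" "(\<Sum>m\<in>UNIV. G m j * (c * Q m)) = c * p j"
  "(\<Sum>m\<in>UNIV. c * Q m * p m) = c * pQ" "(\<Sum>m\<in>UNIV. c * (p m * Q m)) = c * pQ"
  by (simp_all add: p_def pQ_def G_sym[of _ j] sum_distrib_left mult.commute mult.left_commute
      flip: sum_distrib_right)

lemmas tensor_expand =
  A_def T_def covA_def ring_distribs sum.distrib sum_subtractf sum_if_zero contract_G_Q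

lemma trace_A: "(\<Sum>i\<in>UNIV. A i i m) = (real CARD('n) - 1) * p m"
  by (simp add: tensor_expand)

lemma A_contract_p: "(\<Sum>m\<in>UNIV. A m j k * p m) = p j * p k - G j k * pQ"
  by (simp add: tensor_expand G_sym[of k])

lemma Q_contract_A: "(\<Sum>m\<in>UNIV. Q m * A i j m) = pQ * (if i = j then 1 else 0) - p j * Q i"
  by (simp add: A_def ring_distribs sum_subtractf pQ_def p_def[of j] sum_distrib_left
      sum_distrib_right mult_ac)

lemma trace_A_A_cross: "(\<Sum>i\<in>UNIV. \<Sum>m\<in>UNIV. A m i k * A i j m) = p j * p k - G j k * pQ"
proof -
  have inner:
    "(\<Sum>m\<in>UNIV. A m i k * A i j m) = p k * A i j i - G i k * (\<Sum>m\<in>UNIV. Q m * A i j m)"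
    for i by (simp add: A_def[of _ i k] ring_distribs sum_subtractf sum_distrib_left mult_ac)
  show ?thesis
    unfolding inner Q_contract_A by (simp add: tensor_expand G_sym[of k])
qed

lemma trace_A_A:
  "(\<Sum>i\<in>UNIV. \<Sum>m\<in>UNIV. A m j k * A i i m) = (real CARD('n) - 1) * (p j * p k - G j k * pQ)"
proof -
  have "(\<Sum>i\<in>UNIV. \<Sum>m\<in>UNIV. A m j k * A i i m)
      = (\<Sum>m\<in>UNIV. A m j k * (\<Sum>i\<in>UNIV. A i i m))"
    by (subst sum.swap) (simp add: sum_distrib_left)
  also have "\<dots> = (real CARD('n) - 1) * (\<Sum>m\<in>UNIV. A m j k * p m)"
    by (simp add: trace_A sum_distrib_left algebra_simps)
  finally show ?thesis by (simp add: A_contract_p)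
qed

lemma trace_curv:
  "(\<Sum>i\<in>UNIV. covA i i j k - covA j i i k + (\<Sum>m\<in>UNIV. A m j k * A i i m - A m i k * A i j m))
    = - (real CARD('n) - 1) * (2 * \<omega> + pQ) * G j k"
  by (simp add: sum.distrib sum_subtractf trace_A_A trace_A_A_cross)
    (simp add: covA_def ring_distribs sum.distrib sum_subtractf G_sym[of k] contract_G_Q)

lemma trace_covd_tors_1:
  "(\<Sum>i\<in>UNIV. covA i i j k - covA i i k j
      + (\<Sum>m\<in>UNIV. A i i m * T m j k - A m i j * T i m k - A m i k * T i j m)) = 0"
  by (simp add: tensor_expand G_sym[of k j])

lemma trace_covd_tors_2:
  "(\<Sum>i\<in>UNIV. covA j i i k - covA j i k i
      + (\<Sum>m\<in>UNIV. A i j m * T m i k - A m j i * T i m k - A m j k * T i i m))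
    = (real CARD('n) - 1) * (\<omega> + pQ) * G j k"
  by (simp add: tensor_expand G_sym[of k])

lemma trace_TT_1:
  "(\<Sum>i\<in>UNIV. \<Sum>m\<in>UNIV. T m i j * T i m k) = (real CARD('n) - 1) * p j * p k"
  by (simp add: tensor_expand)

lemma trace_TT_2: "(\<Sum>i\<in>UNIV. \<Sum>m\<in>UNIV. T m j k * T i m i) = 0"
  by (simp add: tensor_expand)

lemma trace_TT_3:
  "(\<Sum>i\<in>UNIV. \<Sum>m\<in>UNIV. T m k i * T i m j) = - (real CARD('n) - 1) * p j * p k"
  by (simp add: tensor_expand)

end

definition ssm_deformation ::
  "(real^'n::finite \<Rightarrow> real^'n^'n) \<Rightarrow> (real^'n \<Rightarrow> real^'n) \<Rightarrow> 'n conn" where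
  "ssm_deformation g P y l i j = pi_form g P y j * (if l = i then 1 else 0) - g y $ i $ j * P y $ l"

lemma SSM_eq_LC_plus_ssm_deformation:
  "SSM g P = (\<lambda>y l i j. LC g y l i j + ssm_deformation g P y l i j)"
  by (simp add: fun_eq_iff SSM_def ssm_conn_def LC_def ssm_deformation_def)

locale concircular_ssm_chart = pseudo_riemannian_chart U g
  for U :: "(real^'n::finite) set" and g +
  fixes P :: "real^'n \<Rightarrow> real^'n" and \<omega> :: "real^'n \<Rightarrow> real"
  assumes P_smooth: "smooth_on U (\<lambda>y. P y $ a)"
    and concircular: "concircular_ssm U g P \<omega>"
begin

lemma P_differentiable: "y \<in> U \<Longrightarrow> (\<lambda>y. P y $ a) differentiable (at y)"
  using P_smooth unfolding smooth_on_def by (metis pdn.simps(1))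

lemma pi_form_differentiable: "y \<in> U \<Longrightarrow> (\<lambda>y. pi_form g P y j) differentiable (at y)"
  unfolding pi_form_def
  by (intro differentiable_sum ballI differentiable_mult metric_differentiable P_differentiable) auto

lemma ssm_deformation_differentiable:
  "y \<in> U \<Longrightarrow> (\<lambda>y. ssm_deformation g P y l i j) differentiable (at y)"
  unfolding ssm_deformation_def
  by (intro differentiable_diff differentiable_mult differentiable_const pi_form_differentiable
      metric_differentiable P_differentiable)

lemma cov_pi_concircular:
  "y \<in> U \<Longrightarrow> cov_pi g P y i k = \<omega> y * g y $ i $ k + pi_form g P y i * pi_form g P y k"
  using concircular unfolding concircular_ssm_def by (simp add: algebra_simps)

lemma pd_pi_form:
  "y \<in> U \<Longrightarrow> pd i (\<lambda>y. pi_form g P y k) y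
    = (\<Sum>l\<in>UNIV. g y $ k $ l * pd i (\<lambda>y. P y $ l) y + pd i (\<lambda>y. g y $ k $ l) y * P y $ l)"
  unfolding pi_form_def
  by (simp add: pd_sum pd_mult differentiable_mult metric_differentiable P_differentiable)

lemma pd_metric_contract_P:
  assumes "y \<in> U"
  shows "(\<Sum>l\<in>UNIV. pd i (\<lambda>y. g y $ k $ l) y * P y $ l)
    = (\<Sum>m\<in>UNIV. christoffel g y m i k * pi_form g P y m)
      + (\<Sum>l\<in>UNIV. g y $ k $ l * (\<Sum>m\<in>UNIV. christoffel g y l i m * P y $ m))"
proof -
  have "(\<Sum>l\<in>UNIV. pd i (\<lambda>y. g y $ k $ l) y * P y $ l)
      = (\<Sum>l\<in>UNIV. \<Sum>m\<in>UNIV. g y $ l $ m * christoffel g y m i k * P y $ l)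
        + (\<Sum>l\<in>UNIV. \<Sum>m\<in>UNIV. g y $ k $ m * christoffel g y m i l * P y $ l)"
    unfolding pd_metric[OF assms] by (simp add: distrib_right sum.distrib sum_distrib_right)
  also have "(\<Sum>l\<in>UNIV. \<Sum>m\<in>UNIV. g y $ l $ m * christoffel g y m i k * P y $ l)
      = (\<Sum>m\<in>UNIV. christoffel g y m i k * pi_form g P y m)"
    unfolding pi_form_def
    by (subst sum.swap) (simp add: sum_distrib_left metric_sym[OF assms] mult_ac)
  also have "(\<Sum>l\<in>UNIV. \<Sum>m\<in>UNIV. g y $ k $ m * christoffel g y m i l * P y $ l)
      = (\<Sum>l\<in>UNIV. g y $ k $ l * (\<Sum>m\<in>UNIV. christoffel g y l i m * P y $ m))"
    by (subst sum.swap) (simp add: sum_distrib_left mult.assoc)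
  finally show ?thesis .
qed

(* Lowering the index of nabla P gives nabla pi, which concircularity determines. *)
lemma covd_P_concircular:
  assumes "y \<in> U"
  shows "pd i (\<lambda>y. P y $ l) y + (\<Sum>m\<in>UNIV. christoffel g y l i m * P y $ m)
    = \<omega> y * (if l = i then 1 else 0) + pi_form g P y i * P y $ l"
proof -
  have "(\<Sum>l\<in>UNIV. g y $ k $ l
        * (pd i (\<lambda>y. P y $ l) y + (\<Sum>m\<in>UNIV. christoffel g y l i m * P y $ m)))
      = cov_pi g P y i k" for k
    unfolding cov_pi_def pd_pi_form[OF assms] sum.distrib pd_metric_contract_P[OF assms]
    by (simp add: ring_distribs sum.distrib)
  then have "pd i (\<lambda>y. P y $ l) y + (\<Sum>m\<in>UNIV. christoffel g y l i m * P y $ m)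
      = (\<Sum>k\<in>UNIV. ginv g y l k * (\<omega> y * g y $ k $ i + pi_form g P y i * pi_form g P y k))"
    using cov_pi_concircular[OF assms] metric_sym[OF assms] by (intro raise_index[OF assms]) simp
  also have "\<dots> = \<omega> y * (\<Sum>k\<in>UNIV. ginv g y l k * g y $ k $ i)
      + pi_form g P y i * (\<Sum>k\<in>UNIV. ginv g y l k * pi_form g P y k)"
    by (simp add: ring_distribs sum.distrib sum_distrib_left mult_ac)
  also have "\<dots> = \<omega> y * (if l = i then 1 else 0) + pi_form g P y i * P y $ l"
    by (simp add: ginv_mult_metric[OF assms] ginv_pi_form[OF assms])
  finally show ?thesis .
qed

lemma pd_ssm_deformation:
  assumes "y \<in> U"
  shows "pd i (\<lambda>y. ssm_deformation g P y l j k) y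
    = pd i (\<lambda>y. pi_form g P y k) y * (if l = j then 1 else 0)
      - (g y $ j $ k * pd i (\<lambda>y. P y $ l) y + pd i (\<lambda>y. g y $ j $ k) y * P y $ l)"
proof -
  have "(\<lambda>y. pi_form g P y k * (if l = j then 1 else 0)) differentiable (at y)"
    and "(\<lambda>y. g y $ j $ k * P y $ l) differentiable (at y)"
    by (intro differentiable_mult differentiable_const pi_form_differentiable
        metric_differentiable P_differentiable assms)+
  then show ?thesis
    unfolding ssm_deformation_def
    by (simp only: pd_diff pd_mult_const[OF pi_form_differentiable[OF assms]]
        pd_mult[OF metric_differentiable[OF assms] P_differentiable[OF assms]])
qed

lemma covd_LC_ssm_deformation:
  assumes "y \<in> U"
  shows "covd (LC g) (ssm_deformation g P) y i l j k
    = (\<omega> y * g y $ i $ k + pi_form g P y i * pi_form g P y k) * (if l = j then 1 else 0)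
      - g y $ j $ k * (\<omega> y * (if l = i then 1 else 0) + pi_form g P y i * P y $ l)"
proof -
  have dpi: "pd i (\<lambda>y. pi_form g P y k) y
      = \<omega> y * g y $ i $ k + pi_form g P y i * pi_form g P y k
        + (\<Sum>m\<in>UNIV. christoffel g y m i k * pi_form g P y m)"
    using cov_pi_concircular[OF assms, of i k] unfolding cov_pi_def by simp
  have dP: "pd i (\<lambda>y. P y $ l) y
      = \<omega> y * (if l = i then 1 else 0) + pi_form g P y i * P y $ l
        - (\<Sum>m\<in>UNIV. christoffel g y l i m * P y $ m)"
    using covd_P_concircular[OF assms, of i l] by simp
  show ?thesis
    unfolding covd_def pd_ssm_deformation[OF assms] pd_metric[OF assms] dpi dP
    by (simp add: ssm_deformation_def LC_def ring_distribs sum.distrib sum_subtractf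
        metric_sym[OF assms, of _ k] sum_distrib_left sum_distrib_right algebra_simps)
qed

lemma curv_SSM:
  assumes "y \<in> U"
  shows "curv (SSM g P) y l i j k
    = curv (LC g) y l i j k + covd (LC g) (ssm_deformation g P) y i l j k
      - covd (LC g) (ssm_deformation g P) y j l i k
      + (\<Sum>m\<in>UNIV. ssm_deformation g P y m j k * ssm_deformation g P y l i m
          - ssm_deformation g P y m i k * ssm_deformation g P y l j m)"
  unfolding SSM_eq_LC_plus_ssm_deformation LC_def
  by (rule curv_add_conn[unfolded LC_def]) (use assms christoffel_differentiable
      ssm_deformation_differentiable christoffel_sym in auto)

lemma tors_SSM:
  assumes "y \<in> U"
  shows "tors (SSM g P) y l j k
    = pi_form g P y k * (if l = j then 1 else 0) - pi_form g P y j * (if l = k then 1 else 0)"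
  using christoffel_sym[OF assms, of l j k] metric_sym[OF assms, of j k]
  by (simp add: tors_def SSM_eq_LC_plus_ssm_deformation LC_def ssm_deformation_def)

lemma tors_SSM_eq_tors_ssm_deformation:
  "y \<in> U \<Longrightarrow> tors (SSM g P) y = tors (ssm_deformation g P) y"
  using christoffel_sym by (simp add: fun_eq_iff tors_def SSM_eq_LC_plus_ssm_deformation LC_def)

lemma covd_SSM_tors_SSM:
  assumes "y \<in> U"
  shows "covd (SSM g P) (tors (SSM g P)) y i l j k
    = covd (LC g) (ssm_deformation g P) y i l j k - covd (LC g) (ssm_deformation g P) y i l k j
      + (\<Sum>m\<in>UNIV. ssm_deformation g P y l i m * tors (SSM g P) y m j k
          - ssm_deformation g P y m i j * tors (SSM g P) y l m k
          - ssm_deformation g P y m i k * tors (SSM g P) y l j m)"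
proof -
  have "covd (LC g) (tors (SSM g P)) y = covd (LC g) (tors (ssm_deformation g P)) y"
    by (rule covd_cong_open[OF open_chart assms tors_SSM_eq_tors_ssm_deformation])
  then show ?thesis
    unfolding SSM_eq_LC_plus_ssm_deformation[of g P] covd_add_conn
    by (simp add: covd_tors ssm_deformation_differentiable[OF assms]
        flip: SSM_eq_LC_plus_ssm_deformation)
qed

end

locale concircular_ssm_point = concircular_ssm_chart +
  fixes x :: "real^'n" assumes x_in_chart: "x \<in> U"
begin

sublocale frame: ssm_algebra "\<lambda>a b. g x $ a $ b" "\<lambda>a. P x $ a" "\<omega> x"
  by unfold_locales (rule metric_sym[OF x_in_chart])

lemma frame_p: "frame.p = pi_form g P x"
  by (simp add: fun_eq_iff frame.p_def pi_form_def)

lemma frame_A: "frame.A = ssm_deformation g P x"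
  by (simp add: fun_eq_iff frame.A_def ssm_deformation_def frame_p)

lemma frame_T: "frame.T = tors (SSM g P) x"
  by (simp add: fun_eq_iff frame.T_def tors_SSM[OF x_in_chart] frame_p)

lemma frame_covA: "frame.covA i l j k = covd (LC g) (ssm_deformation g P) x i l j k"
  by (simp add: frame.covA_def covd_LC_ssm_deformation[OF x_in_chart] frame_p)

lemma frame_TT:
  "TT (tors (SSM g P)) x l a b c = (\<Sum>m\<in>UNIV. frame.T m a b * frame.T l m c)"
  by (simp add: TT_def frame_T)

lemma trace_curv_SSM:
  "(\<Sum>i\<in>UNIV. curv (SSM g P) x i i j k)
    = ricci (curv (LC g)) x j k - (real CARD('n) - 1) * (2 * \<omega> x + frame.pQ) * g x $ j $ k"
proof -
  have "(\<Sum>i\<in>UNIV. curv (SSM g P) x i i j k) = ricci (curv (LC g)) x j k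
      + (\<Sum>i\<in>UNIV. frame.covA i i j k - frame.covA j i i k
          + (\<Sum>m\<in>UNIV. frame.A m j k * frame.A i i m - frame.A m i k * frame.A i j m))"
    unfolding curv_SSM[OF x_in_chart] frame_covA frame_A ricci_def
    by (simp add: sum.distrib sum_subtractf)
  then show ?thesis
    unfolding frame.trace_curv by (simp add: algebra_simps)
qed

lemma trace_covd_tors_SSM:
  "(\<Sum>i\<in>UNIV. covd (SSM g P) (tors (SSM g P)) x i i j k) = 0"
  "(\<Sum>i\<in>UNIV. covd (SSM g P) (tors (SSM g P)) x j i i k)
    = (real CARD('n) - 1) * (\<omega> x + frame.pQ) * g x $ j $ k"
  unfolding covd_SSM_tors_SSM[OF x_in_chart] frame_covA[symmetric] frame_A[symmetric]
    frame_T[symmetric]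
  by (rule frame.trace_covd_tors_1 frame.trace_covd_tors_2)+

lemma trace_TT_tors_SSM:
  "(\<Sum>i\<in>UNIV. TT (tors (SSM g P)) x i i j k)
    = (real CARD('n) - 1) * pi_form g P x j * pi_form g P x k"
  "(\<Sum>i\<in>UNIV. TT (tors (SSM g P)) x i k i j)
    = - (real CARD('n) - 1) * pi_form g P x j * pi_form g P x k"
  "(\<Sum>i\<in>UNIV. cycTT (tors (SSM g P)) x i i j k) = 0"
  unfolding cycTT_def sum.distrib frame_TT frame.trace_TT_1 frame.trace_TT_2 frame.trace_TT_3
    frame_p
  by (simp_all add: algebra_simps)

lemmas traces_SSM = trace_curv_SSM trace_covd_tors_SSM trace_TT_tors_SSM

lemma ricci_R0_SSM:
  "ricci (R0 (SSM g P)) x j k = ricci (curv (LC g)) x j k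
    + (- (real CARD('n) - 1) * (3 * \<omega> x + frame.pQ) / 2) * g x $ j $ k
    + (- (real CARD('n) - 1) / 4) * (pi_form g P x j * pi_form g P x k)"
  by (simp add: ricci_def R0_def sum.distrib sum_subtractf traces_SSM
      flip: sum_distrib_left sum_divide_distrib) (simp add: field_simps)

lemma ricci_R1_SSM:
  "ricci (R1 (SSM g P)) x j k = ricci (curv (LC g)) x j k
    + (- (real CARD('n) - 1) * (2 * \<omega> x + frame.pQ)) * g x $ j $ k"
  by (simp add: ricci_def R1_def sum.distrib sum_subtractf traces_SSM
      flip: sum_distrib_left sum_divide_distrib) (simp add: field_simps)

lemma ricci_R2_SSM:
  "ricci (R2 (SSM g P)) x j k = ricci (curv (LC g)) x j k
    + (- (real CARD('n) - 1) * \<omega> x) * g x $ j $ k"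
  by (simp add: ricci_def R2_def sum.distrib sum_subtractf traces_SSM
      flip: sum_distrib_left sum_divide_distrib) (simp add: field_simps)

lemma ricci_R3_SSM:
  "ricci (R3 (SSM g P)) x j k = ricci (curv (LC g)) x j k
    + (- (real CARD('n) - 1) * \<omega> x) * g x $ j $ k"
  by (simp add: ricci_def R3_def sum.distrib sum_subtractf traces_SSM
      flip: sum_distrib_left sum_divide_distrib) (simp add: field_simps)

lemma ricci_R4_SSM:
  "ricci (R4 (SSM g P)) x j k = ricci (curv (LC g)) x j k
    + (- (real CARD('n) - 1) * \<omega> x) * g x $ j $ k
    + (- (real CARD('n) - 1)) * (pi_form g P x j * pi_form g P x k)"
  by (simp add: ricci_def R4_def sum.distrib sum_subtractf traces_SSM
      flip: sum_distrib_left sum_divide_distrib) (simp add: field_simps)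

lemma ricci_R5_SSM:
  "ricci (R5 (SSM g P)) x j k = ricci (curv (LC g)) x j k
    + (- (real CARD('n) - 1) * (3 * \<omega> x + frame.pQ) / 2) * g x $ j $ k
    + (- (real CARD('n) - 1) / 2) * (pi_form g P x j * pi_form g P x k)"
  by (simp add: ricci_def R5_def sum.distrib sum_subtractf traces_SSM
      flip: sum_distrib_left sum_divide_distrib) (simp add: field_simps)

lemma einstein_SSM_shift:
  assumes "\<And>j k. ricci R x j k = ricci (curv (LC g)) x j k + a * g x $ j $ k
    + b * (pi_form g P x j * pi_form g P x k)"
  shows "einstein g R x j k = einstein g (curv (LC g)) x j k
    + b * (pi_form g P x j * pi_form g P x k - frame.pQ / CARD('n) * g x $ j $ k)"
  using einstein_ricci_shift[OF x_in_chart assms]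
  by (simp add: ginv_pi_form_pi_form[OF x_in_chart] frame.pQ_def frame_p)

lemma einstein_SSM_eq:
  assumes "\<And>j k. ricci R x j k = ricci (curv (LC g)) x j k + a * g x $ j $ k"
  shows "einstein g R x j k = einstein g (curv (LC g)) x j k"
  using einstein_SSM_shift[of R a 0] assms by simp

end

theorem mainTheorem5:
  fixes U :: "(real^'n::finite) set"
    and g :: "real^'n \<Rightarrow> real^'n^'n"
    and P :: "real^'n \<Rightarrow> real^'n"
    and \<omega> :: "real^'n \<Rightarrow> real"
  assumes "pseudo_riemannian_on U g"
    and "\<forall>a. smooth_on U (\<lambda>y. P y $ a)"
    and "concircular_ssm U g P \<omega>"
    and "x \<in> U"
  defines "n \<equiv> real CARD('n)"
    and "Eg \<equiv> einstein g (curv (LC g))"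
    and "C \<equiv> SSM g P"
    and "\<pi>P \<equiv> (\<Sum>a\<in>UNIV. pi_form g P x a * P x $ a)"
  shows "\<forall>j k.
      einstein g (R0 C) x j k = Eg x j k + (n - 1) / (4 * n) * \<pi>P * g x $ j $ k
                                   - (n - 1) / 4 * pi_form g P x j * pi_form g P x k
    \<and> einstein g (R1 C) x j k = Eg x j k
    \<and> einstein g (R2 C) x j k = Eg x j k
    \<and> einstein g (R3 C) x j k = Eg x j k
    \<and> einstein g (R4 C) x j k = Eg x j k + (n - 1) / n * \<pi>P * g x $ j $ k
                                   - (n - 1) * pi_form g P x j * pi_form g P x k
    \<and> einstein g (R5 C) x j k = Eg x j k + (n - 1) / (2 * n) * \<pi>P * g x $ j $ k
                                   - (n - 1) / 2 * pi_form g P x j * pi_form g P x k"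
proof -
  interpret concircular_ssm_point U g P \<omega> x
    using assms(1-4) by unfold_locales (auto simp: pseudo_riemannian_chart_def)
  have pQ: "frame.pQ = \<pi>P"
    by (simp add: \<pi>P_def frame.pQ_def frame_p)
  let ?shift = "\<lambda>j k. pi_form g P x j * pi_form g P x k - \<pi>P / n * g x $ j $ k"
  have "einstein g (R0 C) x j k = Eg x j k + (- (n - 1) / 4) * ?shift j k"
    and "einstein g (R1 C) x j k = Eg x j k"
    and "einstein g (R2 C) x j k = Eg x j k"
    and "einstein g (R3 C) x j k = Eg x j k"
    and "einstein g (R4 C) x j k = Eg x j k + (- (n - 1)) * ?shift j k"
    and "einstein g (R5 C) x j k = Eg x j k + (- (n - 1) / 2) * ?shift j k" for j k
    unfolding Eg_def C_def n_def pQ[symmetric]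
    by (rule einstein_SSM_shift[OF ricci_R0_SSM] einstein_SSM_eq[OF ricci_R1_SSM]
        einstein_SSM_eq[OF ricci_R2_SSM] einstein_SSM_eq[OF ricci_R3_SSM]
        einstein_SSM_shift[OF ricci_R4_SSM] einstein_SSM_shift[OF ricci_R5_SSM])+
  note einstein_eqs = this
  have "n \<noteq> 0"
    by (simp add: n_def)
  then show ?thesis
    unfolding einstein_eqs by (simp add: field_simps)
qed

end
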